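(* Let $n\ge 1$, let $Q$ be an $n$-state 1gQFA over a finite alphabet $\Sigma$, and let $\lambda\in[0,1)$. Then there exist a one-way PFA $P$ over $\Sigma$ with at most $2n^2+6$ states and a strict cutpoint $\mu\in[0,1)$ such that $L(P,\mu)=L(Q,\lambda)$. In particular, the cost of strict-cutpoint simulation of $n$-state 1gQFA by PFA is $O(n^2)$ states.
   Context: Let $\Sigma$ be a finite alphabet and $\Sigma^\ast$ the set of finite words over it. Probabilistic computations are written with row vectors; stochastic matrices act on the right. A one-way PFA (probabilistic finite automaton, end-marker model) over $\Sigma$ is a tuple $P=(S,\Sigma,\pi,\{P_\sigma\}_{\sigma\in\Sigma},P_{\#},F)$, where $S$ is a finite state set (its number of states is $|S|$), $\pi$ is an initial probability distribution (row vector) on $S$, each $P_\sigma$ and $P_\#$ are row-stochastic $|S|\times|S|$ matrices, and $F\subseteq S$. For $w=\sigma_1\cdots\sigma_m$, $f_P(w)=\pi P_{\sigma_1}\cdots P_{\sigma_m}P_\#\mathbf 1_F$, where $\mathbf 1_F$ is the indicator column vector of $F$. For $\mu\in[0,1)$, $L(P,\mu)=\{w\in\Sigma^\ast: f_P(w)>\mu\}$. An $n$-state 1gQFA (measure-once one-way general quantum finite automaton) over $\Sigma$ is a tuple $Q=(\mathcal H,\Sigma,\rho_0,\{\mathcal E_\sigma\}_{\sigma\in\Sigma},P_{\mathrm{acc}})$ where $\mathcal H\cong\mathbb C^n$, $\rho_0$ is a density operator on $\mathcal H$, each $\mathcal E_\sigma$ is a completely positive trace-preserving map on the operators on $\mathcal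 H$, and $P_{\mathrm{acc}}$ is an orthogonal projector on $\mathcal H$. For $w=\sigma_1\cdots\sigma_m$, $\rho_w=\mathcal E_{\sigma_m}\circ\cdots\circ\mathcal E_{\sigma_1}(\rho_0)$ and $f_Q(w)=\operatorname{Tr}(P_{\mathrm{acc}}\rho_w)$. For $\lambda\in[0,1)$, $L(Q,\lambda)=\{w\in\Sigma^\ast: f_Q(w)>\lambda\}$. *)

theory Defs
  imports Complex_Main "Jordan_Normal_Form.Matrix"
begin

definition mtrace :: "'b::comm_ring_1 mat \<Rightarrow> 'b" where
  "mtrace M = (\<Sum>i<dim_row M. M $$ (i, i))"

definition adj :: "complex mat \<Rightarrow> complex mat" where
  "adj M = mat (dim_col M) (dim_row M) (\<lambda>(i, j). cnj (M $$ (j, i)))"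

definition psd :: "nat \<Rightarrow> complex mat \<Rightarrow> bool" where
  "psd n M \<longleftrightarrow> M \<in> carrier_mat n n \<and> adj M = M \<and>
     (\<forall>v \<in> carrier_vec n. 0 \<le> Re ((M *\<^sub>v v) \<bullet>c v))"

definition density_op :: "nat \<Rightarrow> complex mat \<Rightarrow> bool" where
  "density_op n \<rho> \<longleftrightarrow> psd n \<rho> \<and> mtrace \<rho> = 1"

definition orth_projector :: "nat \<Rightarrow> complex mat \<Rightarrow> bool" where
  "orth_projector n P \<longleftrightarrow> P \<in> carrier_mat n n \<and> P * P = P \<and> adj P = P"

(* (id_k \<otimes> E) applied to a (k n) x (k n) matrix viewed as k x k blocks of n x n matrices *)
definition ampl :: "nat \<Rightarrow> nat \<Rightarrow> (complex mat \<Rightarrow> complex mat) \<Rightarrow> complex mat \<Rightarrow> complex mat" where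
  "ampl k n E M = mat (k * n) (k * n) (\<lambda>(i, j).
      E (mat n n (\<lambda>(p, q). M $$ ((i div n) * n + p, (j div n) * n + q))) $$ (i mod n, j mod n))"

definition linear_map_on :: "nat \<Rightarrow> (complex mat \<Rightarrow> complex mat) \<Rightarrow> bool" where
  "linear_map_on n E \<longleftrightarrow>
     (\<forall>A \<in> carrier_mat n n. E A \<in> carrier_mat n n) \<and>
     (\<forall>A \<in> carrier_mat n n. \<forall>B \<in> carrier_mat n n. E (A + B) = E A + E B) \<and>
     (\<forall>A \<in> carrier_mat n n. \<forall>c. E (c \<cdot>\<^sub>m A) = c \<cdot>\<^sub>m E A)"

definition completely_positive :: "nat \<Rightarrow> (complex mat \<Rightarrow> complex mat) \<Rightarrow> bool" where
  "completely_positive n E \<longleftrightarrow>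
     (\<forall>k. \<forall>M. psd (k * n) M \<longrightarrow> psd (k * n) (ampl k n E M))"

definition trace_preserving :: "nat \<Rightarrow> (complex mat \<Rightarrow> complex mat) \<Rightarrow> bool" where
  "trace_preserving n E \<longleftrightarrow> (\<forall>A \<in> carrier_mat n n. mtrace (E A) = mtrace A)"

definition cptp :: "nat \<Rightarrow> (complex mat \<Rightarrow> complex mat) \<Rightarrow> bool" where
  "cptp n E \<longleftrightarrow> linear_map_on n E \<and> completely_positive n E \<and> trace_preserving n E"

definition gqfa :: "nat \<Rightarrow> complex mat \<Rightarrow> ('a \<Rightarrow> complex mat \<Rightarrow> complex mat) \<Rightarrow> complex mat \<Rightarrow> bool" where
  "gqfa n \<rho>0 E Pacc \<longleftrightarrow> density_op n \<rho>0 \<and> (\<forall>\<sigma>. cptp n (E \<sigma>)) \<and> orth_projector n Pacc"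

definition gqfa_state :: "complex mat \<Rightarrow> ('a \<Rightarrow> complex mat \<Rightarrow> complex mat) \<Rightarrow> 'a list \<Rightarrow> complex mat" where
  "gqfa_state \<rho>0 E w = foldl (\<lambda>\<rho> \<sigma>. E \<sigma> \<rho>) \<rho>0 w"

definition gqfa_prob :: "complex mat \<Rightarrow> ('a \<Rightarrow> complex mat \<Rightarrow> complex mat) \<Rightarrow> complex mat \<Rightarrow> 'a list \<Rightarrow> real" where
  "gqfa_prob \<rho>0 E Pacc w = Re (mtrace (Pacc * gqfa_state \<rho>0 E w))"

definition gqfa_lang :: "complex mat \<Rightarrow> ('a \<Rightarrow> complex mat \<Rightarrow> complex mat) \<Rightarrow> complex mat \<Rightarrow> real \<Rightarrow> 'a list set" where
  "gqfa_lang \<rho>0 E Pacc lam = {w. gqfa_prob \<rho>0 E Pacc w > lam}"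

definition stochastic_vec :: "nat \<Rightarrow> real vec \<Rightarrow> bool" where
  "stochastic_vec m v \<longleftrightarrow> v \<in> carrier_vec m \<and> (\<forall>i<m. 0 \<le> v $ i) \<and> (\<Sum>i<m. v $ i) = 1"

definition stochastic_mat :: "nat \<Rightarrow> real mat \<Rightarrow> bool" where
  "stochastic_mat m A \<longleftrightarrow> A \<in> carrier_mat m m \<and> (\<forall>i<m. \<forall>j<m. 0 \<le> A $$ (i, j)) \<and>
     (\<forall>i<m. (\<Sum>j<m. A $$ (i, j)) = 1)"

definition pfa :: "nat \<Rightarrow> real vec \<Rightarrow> ('a \<Rightarrow> real mat) \<Rightarrow> real mat \<Rightarrow> nat set \<Rightarrow> bool" where
  "pfa m \<pi> P Pend F \<longleftrightarrow> stochastic_vec m \<pi> \<and> (\<forall>\<sigma>. stochastic_mat m (P \<sigma>)) \<and>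
     stochastic_mat m Pend \<and> F \<subseteq> {..<m}"

definition row_mult :: "real vec \<Rightarrow> real mat \<Rightarrow> real vec" where
  "row_mult v A = vec (dim_col A) (\<lambda>j. \<Sum>i<dim_vec v. v $ i * A $$ (i, j))"

definition pfa_prob :: "real vec \<Rightarrow> ('a \<Rightarrow> real mat) \<Rightarrow> real mat \<Rightarrow> nat set \<Rightarrow> 'a list \<Rightarrow> real" where
  "pfa_prob \<pi> P Pend F w =
     (let v = row_mult (foldl (\<lambda>u \<sigma>. row_mult u (P \<sigma>)) \<pi> w) Pend
      in \<Sum>i\<in>F. v $ i)"

definition pfa_lang :: "real vec \<Rightarrow> ('a \<Rightarrow> real mat) \<Rightarrow> real mat \<Rightarrow> nat set \<Rightarrow> real \<Rightarrow> 'a list set" where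
  "pfa_lang \<pi> P Pend F \<mu> = {w. pfa_prob \<pi> P Pend F w > \<mu>}"

end

theory Submission
  imports Defs
begin

(*
  In the 2n^2 real coordinates of a complex n x n matrix (real and imaginary parts of the
  entries), every CPTP map acts as a real matrix, and since all states rho_w have trace 1,
  f_Q(w) - lambda = Re tr (P_acc rho_w) - lambda Re tr rho_w is a real-linear functional of rho_w.
  So L(Q, lambda) is the set of words on which a real linear automaton of dimension d = 2n^2
  takes a positive value.  Turakainen's construction turns such an automaton into a PFA with
  d + 2 states: bordering each transition matrix so that all its row and column sums vanish,
  adding a large constant and normalising gives stochastic matrices, under which the uniform
  distribution plus a multiple of a zero-sum vector evolves like the linear automaton.
  The end-marker matrix then reads off the functional as a deviation from the cutpoint.
*)

definition row_mult_fun :: "nat \<Rightarrow> (nat \<Rightarrow> real) \<Rightarrow> (nat \<Rightarrow> nat \<Rightarrow> real) \<Rightarrow> nat \<Rightarrow> real" where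
  "row_mult_fun d x A = (\<lambda>j. \<Sum>i<d. x i * A i j)"

definition linear_run ::
    "nat \<Rightarrow> ('a \<Rightarrow> nat \<Rightarrow> nat \<Rightarrow> real) \<Rightarrow> (nat \<Rightarrow> real) \<Rightarrow> 'a list \<Rightarrow> nat \<Rightarrow> real" where
  "linear_run d A x0 w = foldl (\<lambda>x \<sigma>. row_mult_fun d x (A \<sigma>)) x0 w"

lemma linear_run_Nil [simp]: "linear_run d A x0 [] = x0"
  by (simp add: linear_run_def)

lemma linear_run_snoc [simp]:
  "linear_run d A x0 (w @ [\<sigma>]) = row_mult_fun d (linear_run d A x0 w) (A \<sigma>)"
  by (simp add: linear_run_def)

section \<open>Turakainen's construction\<close>

lemma sum_lessThan_Suc_Suc: "(\<Sum>i<Suc (Suc d). f i) = (\<Sum>i<d. f i) + f d + f (Suc d)"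
  by simp

definition bordered :: "nat \<Rightarrow> (nat \<Rightarrow> nat \<Rightarrow> real) \<Rightarrow> nat \<Rightarrow> nat \<Rightarrow> real" where
  "bordered d A i j =
     (if i < d then (if j < d then A i j else if j = d then - (\<Sum>k<d. A i k) else 0)
      else if i = d then 0
      else if j < d then - (\<Sum>k<d. A k j) else if j = d then (\<Sum>k<d. \<Sum>l<d. A k l) else 0)"

definition zero_sum_ext :: "nat \<Rightarrow> (nat \<Rightarrow> real) \<Rightarrow> nat \<Rightarrow> real" where
  "zero_sum_ext d x i = (if i < d then x i else if i = d then - (\<Sum>k<d. x k) else 0)"

lemma bordered_col_sum: "(\<Sum>i<Suc (Suc d). bordered d A i j) = 0"
proof -
  have "(\<Sum>i<d. bordered d A i j) =
      (\<Sum>i<d. if j < d then A i j else if j = d then - (\<Sum>k<d. A i k) else 0)"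
    by (rule sum.cong) (auto simp: bordered_def)
  then show ?thesis
    by (auto simp: sum_lessThan_Suc_Suc bordered_def sum_negf simp del: sum.lessThan_Suc)
qed

lemma bordered_row_sum: "(\<Sum>j<Suc (Suc d). bordered d A i j) = 0"
proof -
  have "(\<Sum>j<d. bordered d A i j) =
      (if i < d then (\<Sum>k<d. A i k) else if i = d then 0 else - (\<Sum>j<d. \<Sum>k<d. A k j))"
    by (auto simp: bordered_def sum_negf intro!: sum.cong)
  also have "(\<Sum>j<d. \<Sum>k<d. A k j) = (\<Sum>k<d. \<Sum>l<d. A k l)"
    by (rule sum.swap)
  finally show ?thesis
    by (auto simp: sum_lessThan_Suc_Suc bordered_def simp del: sum.lessThan_Suc)
qed

lemma zero_sum_ext_sum: "(\<Sum>i<Suc (Suc d). zero_sum_ext d x i) = 0"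
proof -
  have "(\<Sum>i<d. zero_sum_ext d x i) = (\<Sum>i<d. x i)"
    by (rule sum.cong) (auto simp: zero_sum_ext_def)
  then show ?thesis
    by (simp add: sum_lessThan_Suc_Suc zero_sum_ext_def del: sum.lessThan_Suc)
qed

lemma zero_sum_ext_mult_bordered:
  "(\<Sum>i<Suc (Suc d). zero_sum_ext d x i * bordered d A i j) = zero_sum_ext d (row_mult_fun d x A) j"
proof -
  have "(\<Sum>i<d. zero_sum_ext d x i * bordered d A i j) =
      (\<Sum>i<d. x i * (if j < d then A i j else if j = d then - (\<Sum>k<d. A i k) else 0))"
    by (rule sum.cong) (auto simp: bordered_def zero_sum_ext_def)
  also have "\<dots> = (if j < d then row_mult_fun d x A j
      else if j = d then - (\<Sum>k<d. row_mult_fun d x A k) else 0)"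
  proof -
    have "(\<Sum>i<d. x i * (\<Sum>k<d. A i k)) = (\<Sum>k<d. row_mult_fun d x A k)"
      unfolding row_mult_fun_def sum_distrib_left by (rule sum.swap)
    then show ?thesis by (auto simp: row_mult_fun_def sum_negf)
  qed
  finally show ?thesis
    by (auto simp: sum_lessThan_Suc_Suc zero_sum_ext_def bordered_def simp del: sum.lessThan_Suc)
qed

lemma sum_zero_sum_ext_mult_shift:
  "(\<Sum>i<Suc (Suc d). zero_sum_ext d x i * (a + (if i < d then b i else 0))) = (\<Sum>i<d. x i * b i)"
proof -
  have "(\<Sum>i<d. zero_sum_ext d x i * (a + (if i < d then b i else 0))) =
      a * (\<Sum>i<d. x i) + (\<Sum>i<d. x i * b i)"
    by (auto simp: zero_sum_ext_def sum_distrib_left sum.distrib algebra_simps intro!: sum.cong)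
  then show ?thesis
    by (simp add: sum_lessThan_Suc_Suc zero_sum_ext_def del: sum.lessThan_Suc)
qed

lemma abs_le_sum_abs: "i < (n::nat) \<Longrightarrow> \<bar>f i\<bar> \<le> (\<Sum>k<n. \<bar>f k :: real\<bar>)"
  by (rule member_le_sum) simp_all

definition bordered_bound :: "nat \<Rightarrow> (nat \<Rightarrow> nat \<Rightarrow> real) \<Rightarrow> real" where
  "bordered_bound d A = 1 + (\<Sum>i<Suc (Suc d). \<Sum>j<Suc (Suc d). \<bar>bordered d A i j\<bar>)"

definition turakainen_mat :: "nat \<Rightarrow> (nat \<Rightarrow> nat \<Rightarrow> real) \<Rightarrow> real mat" where
  "turakainen_mat d A = mat (Suc (Suc d)) (Suc (Suc d))
     (\<lambda>(i, j). (bordered d A i j + bordered_bound d A) / (real (Suc (Suc d)) * bordered_bound d A))"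

lemma bordered_bound_ge:
  assumes "i < Suc (Suc d)" "j < Suc (Suc d)"
  shows "\<bar>bordered d A i j\<bar> + 1 \<le> bordered_bound d A"
proof -
  have "\<bar>bordered d A i j\<bar> \<le> (\<Sum>j<Suc (Suc d). \<bar>bordered d A i j\<bar>)"
    using assms(2) by (rule abs_le_sum_abs)
  also have "\<dots> \<le> (\<Sum>i<Suc (Suc d). \<Sum>j<Suc (Suc d). \<bar>bordered d A i j\<bar>)"
    by (rule member_le_sum[where f = "\<lambda>i. \<Sum>j<Suc (Suc d). \<bar>bordered d A i j\<bar>"])
      (use assms in \<open>auto intro: sum_nonneg\<close>)
  finally show ?thesis by (simp add: bordered_bound_def)
qed

lemma bordered_bound_pos: "bordered_bound d A > 0"
  using bordered_bound_ge[of 0 d 0 A] by simp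

lemma stochastic_turakainen_mat: "stochastic_mat (Suc (Suc d)) (turakainen_mat d A)"
proof -
  define N where "N = real (Suc (Suc d))"
  define K where "K = bordered_bound d A"
  have K: "K > 0" by (simp add: K_def bordered_bound_pos)
  have "0 \<le> bordered d A i j + K" if "i < Suc (Suc d)" "j < Suc (Suc d)" for i j
    using bordered_bound_ge[OF that, of A] by (simp add: K_def)
  moreover have "(\<Sum>j<Suc (Suc d). (bordered d A i j + K) / (N * K)) = 1" for i
    using K by (simp add: sum_divide_distrib[symmetric] sum.distrib bordered_row_sum N_def
        del: sum.lessThan_Suc)
  ultimately show ?thesis
    using K by (auto simp: stochastic_mat_def turakainen_mat_def N_def K_def)
qed

definition uniform_shift :: "nat \<Rightarrow> real \<Rightarrow> (nat \<Rightarrow> real) \<Rightarrow> real vec" where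
  "uniform_shift N c y = vec N (\<lambda>i. 1 / real N + c * y i)"

lemma row_mult_turakainen_mat:
  "row_mult (uniform_shift (Suc (Suc d)) c (zero_sum_ext d x)) (turakainen_mat d A) =
   uniform_shift (Suc (Suc d)) (c / (real (Suc (Suc d)) * bordered_bound d A))
     (zero_sum_ext d (row_mult_fun d x A))"
proof (rule eq_vecI)
  define N where "N = real (Suc (Suc d))"
  define K where "K = bordered_bound d A"
  have N: "N > 0" and K: "K > 0" by (simp_all add: N_def K_def bordered_bound_pos)
  fix j assume "j < dim_vec (uniform_shift (Suc (Suc d)) (c / (N * K)) (zero_sum_ext d (row_mult_fun d x A)))"
  then have j: "j < Suc (Suc d)" by (simp add: uniform_shift_def)
  let ?y = "zero_sum_ext d x"
  have "row_mult (uniform_shift (Suc (Suc d)) c ?y) (turakainen_mat d A) $ j =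
      (\<Sum>i<Suc (Suc d). (1 / N + c * ?y i) * ((bordered d A i j + K) / (N * K)))"
    using j by (simp add: row_mult_def uniform_shift_def turakainen_mat_def N_def K_def)
  also have "\<dots> = (\<Sum>i<Suc (Suc d). (1 / (N * N * K)) * bordered d A i j + 1 / (N * N)
      + (c / (N * K)) * (?y i * bordered d A i j) + (c / N) * ?y i)"
    by (rule sum.cong) (use N K in \<open>auto simp: field_simps\<close>)
  also have "\<dots> = (1 / (N * N * K)) * (\<Sum>i<Suc (Suc d). bordered d A i j) + N * (1 / (N * N))
      + (c / (N * K)) * (\<Sum>i<Suc (Suc d). ?y i * bordered d A i j)
      + (c / N) * (\<Sum>i<Suc (Suc d). ?y i)"
    by (simp add: sum.distrib sum_distrib_left N_def del: sum.lessThan_Suc)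
  also have "\<dots> = 1 / N + (c / (N * K)) * zero_sum_ext d (row_mult_fun d x A) j"
    unfolding bordered_col_sum zero_sum_ext_mult_bordered zero_sum_ext_sum using N by simp
  finally show "row_mult (uniform_shift (Suc (Suc d)) c ?y) (turakainen_mat d A) $ j =
      uniform_shift (Suc (Suc d)) (c / (N * K)) (zero_sum_ext d (row_mult_fun d x A)) $ j"
    using j by (simp add: uniform_shift_def N_def)
qed (simp add: row_mult_def turakainen_mat_def uniform_shift_def)

lemma turakainen_run:
  assumes "c > 0"
  shows "\<exists>c'>0. foldl (\<lambda>u \<sigma>. row_mult u (turakainen_mat d (A \<sigma>)))
      (uniform_shift (Suc (Suc d)) c (zero_sum_ext d x0)) w =
    uniform_shift (Suc (Suc d)) c' (zero_sum_ext d (linear_run d A x0 w))"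
proof (induction w rule: rev_induct)
  case Nil
  then show ?case using assms by auto
next
  case (snoc \<sigma> w)
  then obtain c' where "c' > 0" and "foldl (\<lambda>u \<sigma>. row_mult u (turakainen_mat d (A \<sigma>)))
      (uniform_shift (Suc (Suc d)) c (zero_sum_ext d x0)) w =
    uniform_shift (Suc (Suc d)) c' (zero_sum_ext d (linear_run d A x0 w))"
    by blast
  moreover have "c' / (real (Suc (Suc d)) * bordered_bound d (A \<sigma>)) > 0"
    using \<open>c' > 0\<close> bordered_bound_pos by simp
  ultimately show ?case by (auto simp: row_mult_turakainen_mat)
qed

lemma stochastic_uniform_shift_exists:
  assumes "N > 0" and "(\<Sum>i<N. y i) = 0"
  shows "\<exists>c>0. stochastic_vec N (uniform_shift N c y)"
proof -
  define S where "S = (\<Sum>i<N. \<bar>y i\<bar>)"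
  have S: "S \<ge> 0" unfolding S_def by (intro sum_nonneg) auto
  define c where "c = 1 / (real N * (1 + S))"
  have c: "c > 0" using assms S by (simp add: c_def)
  have "0 \<le> 1 / real N + c * y i" if "i < N" for i
  proof -
    have "\<bar>y i\<bar> \<le> 1 + S" using abs_le_sum_abs[OF that, of y] by (simp add: S_def)
    then have "c * \<bar>y i\<bar> \<le> c * (1 + S)"
      using c by (intro mult_left_mono) auto
    also have "c * (1 + S) = 1 / real N"
      using S by (simp add: c_def)
    finally have "c * \<bar>y i\<bar> \<le> 1 / real N" .
    moreover have "- \<bar>y i\<bar> \<le> y i" by simp
    then have "- (c * \<bar>y i\<bar>) \<le> c * y i" using c by (simp add: mult_left_mono flip: mult_minus_right)
    ultimately show ?thesis by linarith
  qed
  moreover have "(\<Sum>i<N. 1 / real N + c * y i) = 1"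
    using assms by (simp add: sum.distrib flip: sum_distrib_left)
  ultimately show ?thesis
    using c by (auto simp: stochastic_vec_def uniform_shift_def)
qed

lemma sum_uniform_shift_mult:
  "(\<Sum>i<N. uniform_shift N c y $ i * h i) = (\<Sum>i<N. h i) / real N + c * (\<Sum>i<N. y i * h i)"
proof -
  have "(\<Sum>i<N. uniform_shift N c y $ i * h i) = (\<Sum>i<N. h i / real N + c * (y i * h i))"
    by (rule sum.cong) (auto simp: uniform_shift_def algebra_simps)
  then show ?thesis
    by (simp add: sum.distrib sum_distrib_left sum_divide_distrib)
qed

definition end_matrix :: "nat \<Rightarrow> (nat \<Rightarrow> real) \<Rightarrow> real mat" where
  "end_matrix N h = mat N N (\<lambda>(i, j). if j = 0 then h i else if j = 1 then 1 - h i else 0)"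

lemma stochastic_end_matrix:
  assumes "2 \<le> N" and "\<And>i. i < N \<Longrightarrow> 0 \<le> h i \<and> h i \<le> 1"
  shows "stochastic_mat N (end_matrix N h)"
proof -
  obtain M where N: "N = Suc (Suc M)" using assms(1) by (metis add_2_eq_Suc le_Suc_ex)
  have "(\<Sum>j<N. if j = 0 then h i else if j = 1 then 1 - h i else 0) = 1" for i
    by (simp add: N sum.lessThan_Suc_shift del: sum.lessThan_Suc)
  then show ?thesis
    using assms(2) by (auto simp: stochastic_mat_def end_matrix_def)
qed

lemma pfa_prob_end_matrix:
  assumes "0 < N" and "\<And>\<sigma>. P \<sigma> \<in> carrier_mat N N" and "\<pi> \<in> carrier_vec N"
  shows "pfa_prob \<pi> P (end_matrix N h) {0} w =
    (\<Sum>i<N. foldl (\<lambda>u \<sigma>. row_mult u (P \<sigma>)) \<pi> w $ i * h i)"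
proof -
  have "foldl (\<lambda>u \<sigma>. row_mult u (P \<sigma>)) \<pi> w \<in> carrier_vec N"
    using assms(2,3) by (induction w rule: rev_induct) (auto simp: row_mult_def)
  then show ?thesis using assms(1) by (simp add: pfa_prob_def row_mult_def end_matrix_def)
qed

theorem turakainen:
  fixes A :: "'a \<Rightarrow> nat \<Rightarrow> nat \<Rightarrow> real" and x0 \<beta> :: "nat \<Rightarrow> real"
  shows "\<exists>\<pi> (P :: 'a \<Rightarrow> real mat) Pend F \<mu>. pfa (Suc (Suc d)) \<pi> P Pend F \<and> 0 \<le> \<mu> \<and> \<mu> < 1 \<and>
    (\<forall>w. pfa_prob \<pi> P Pend F w > \<mu> \<longleftrightarrow> (\<Sum>i<d. linear_run d A x0 w i * \<beta> i) > 0)"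
proof -
  define N where "N = Suc (Suc d)"
  obtain c where c: "c > 0" and stoch: "stochastic_vec N (uniform_shift N c (zero_sum_ext d x0))"
    using stochastic_uniform_shift_exists[of N "zero_sum_ext d x0"]
    by (auto simp: N_def zero_sum_ext_sum simp del: sum.lessThan_Suc)
  define S where "S = (\<Sum>i<d. \<bar>\<beta> i\<bar>)"
  have S: "S \<ge> 0" by (simp add: S_def sum_nonneg)
  define \<delta> where "\<delta> = 1 / (2 * (1 + S))"
  have \<delta>: "\<delta> > 0" using S by (simp add: \<delta>_def)
  define h where "h i = 1/2 + (if i < d then \<delta> * \<beta> i else 0)" for i
  have h: "0 \<le> h i \<and> h i < 1" for i
  proof (cases "i < d")
    case True
    have "\<delta> * \<bar>\<beta> i\<bar> \<le> \<delta> * S"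
      using abs_le_sum_abs[OF True] \<delta> by (intro mult_left_mono) (auto simp: S_def)
    also have "\<dots> < \<delta> * (1 + S)"
      using \<delta> by simp
    also have "\<dots> = 1/2"
      using S by (simp add: \<delta>_def)
    finally have "\<bar>\<delta> * \<beta> i\<bar> < 1/2"
      using \<delta> by (simp add: abs_mult)
    then show ?thesis
      using True by (auto simp: h_def abs_less_iff)
  qed (simp add: h_def)
  define \<mu> where "\<mu> = (\<Sum>i<N. h i) / real N"
  have \<mu>: "0 \<le> \<mu> \<and> \<mu> < 1"
  proof -
    have "0 \<le> (\<Sum>i<N. h i)" using h by (intro sum_nonneg) auto
    moreover have "(\<Sum>i<N. h i) < (\<Sum>i<N. 1)" using h by (intro sum_strict_mono) (auto simp: N_def)
    ultimately show ?thesis by (simp add: \<mu>_def N_def)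
  qed
  define P where "P \<sigma> = turakainen_mat d (A \<sigma>)" for \<sigma>
  define \<pi> where "\<pi> = uniform_shift N c (zero_sum_ext d x0)"
  have pfa: "pfa N \<pi> P (end_matrix N h) {0}"
    unfolding pfa_def
  proof (intro conjI allI)
    show "stochastic_vec N \<pi>"
      using stoch by (simp add: \<pi>_def)
    show "stochastic_mat N (P \<sigma>)" for \<sigma>
      by (simp add: P_def N_def stochastic_turakainen_mat)
    show "stochastic_mat N (end_matrix N h)"
      using h by (intro stochastic_end_matrix) (auto simp: N_def less_imp_le)
  qed (simp add: N_def)
  have prob: "\<exists>k>0. pfa_prob \<pi> P (end_matrix N h) {0} w =
      \<mu> + k * (\<Sum>i<d. linear_run d A x0 w i * \<beta> i)" for w
  proof -
    let ?x = "linear_run d A x0 w"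
    obtain c' where "c' > 0" and run:
      "foldl (\<lambda>u \<sigma>. row_mult u (P \<sigma>)) \<pi> w = uniform_shift N c' (zero_sum_ext d ?x)"
      using turakainen_run[OF c, of d A x0 w] by (auto simp: \<pi>_def P_def N_def)
    have "pfa_prob \<pi> P (end_matrix N h) {0} w = (\<Sum>i<N. uniform_shift N c' (zero_sum_ext d ?x) $ i * h i)"
      unfolding run[symmetric] using stoch
      by (intro pfa_prob_end_matrix) (auto simp: \<pi>_def N_def P_def turakainen_mat_def stochastic_vec_def)
    also have "\<dots> = \<mu> + c' * (\<Sum>i<N. zero_sum_ext d ?x i * h i)"
      by (simp add: sum_uniform_shift_mult \<mu>_def)
    also have "(\<Sum>i<N. zero_sum_ext d ?x i * h i) = (\<Sum>i<d. ?x i * (\<delta> * \<beta> i))"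
      unfolding N_def h_def by (rule sum_zero_sum_ext_mult_shift)
    also have "\<dots> = \<delta> * (\<Sum>i<d. ?x i * \<beta> i)"
      by (simp add: sum_distrib_left mult.left_commute)
    finally show ?thesis
      using \<open>c' > 0\<close> \<delta> by (intro exI[of _ "c' * \<delta>"]) (simp add: mult.assoc)
  qed
  then have "pfa_prob \<pi> P (end_matrix N h) {0} w > \<mu> \<longleftrightarrow>
      (\<Sum>i<d. linear_run d A x0 w i * \<beta> i) > 0" for w
  proof -
    obtain k where "k > 0" and "pfa_prob \<pi> P (end_matrix N h) {0} w =
        \<mu> + k * (\<Sum>i<d. linear_run d A x0 w i * \<beta> i)"
      using prob by blast
    then show ?thesis by (auto simp: zero_less_mult_iff)
  qed
  with pfa \<mu> show ?thesis
    unfolding N_def by blast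
qed

section \<open>Real coordinates of complex matrices\<close>

definition realcoord :: "nat \<Rightarrow> complex mat \<Rightarrow> nat \<Rightarrow> real" where
  "realcoord n M k =
     (if k < n^2 then Re (M $$ (k div n, k mod n))
      else Im (M $$ ((k - n^2) div n, (k - n^2) mod n)))"

definition mat_of_realcoord :: "nat \<Rightarrow> (nat \<Rightarrow> real) \<Rightarrow> complex mat" where
  "mat_of_realcoord n x = mat n n (\<lambda>(i, j). Complex (x (i * n + j)) (x (n^2 + i * n + j)))"

definition unit_coord :: "nat \<Rightarrow> nat \<Rightarrow> real" where
  "unit_coord k = (\<lambda>j. if j = k then 1 else 0)"

lemma index_lt_square:
  assumes "i < n" "j < (n::nat)"
  shows "i * n + j < n^2"
proof -
  have "i * n + j < Suc i * n" using assms by simp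
  also have "\<dots> \<le> n * n" using assms by (intro mult_le_mono1) simp
  finally show ?thesis by (simp add: power2_eq_square)
qed

lemma realcoord_index_bounds:
  fixes k n :: nat
  assumes "k < 2 * n^2"
  shows "k < n^2 \<Longrightarrow> k div n < n \<and> k mod n < n"
    and "\<not> k < n^2 \<Longrightarrow> (k - n^2) div n < n \<and> (k - n^2) mod n < n"
proof -
  have n: "n > 0" using assms by (cases n) auto
  show "k < n^2 \<Longrightarrow> k div n < n \<and> k mod n < n"
    using n by (auto simp: power2_eq_square less_mult_imp_div_less)
  assume "\<not> k < n^2"
  then have "k - n^2 < n * n" using assms by (simp add: power2_eq_square)
  then show "(k - n^2) div n < n \<and> (k - n^2) mod n < n"
    using n by (auto simp: less_mult_imp_div_less)
qed

lemma realcoord_add: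
  assumes "A \<in> carrier_mat n n" "B \<in> carrier_mat n n" "k < 2 * n^2"
  shows "realcoord n (A + B) k = realcoord n A k + realcoord n B k"
  using assms realcoord_index_bounds[OF assms(3)] by (auto simp: realcoord_def)

lemma realcoord_smult:
  assumes "A \<in> carrier_mat n n" "k < 2 * n^2"
  shows "realcoord n (complex_of_real c \<cdot>\<^sub>m A) k = c * realcoord n A k"
  using assms realcoord_index_bounds[OF assms(2)] by (auto simp: realcoord_def)

lemma mat_of_realcoord_carrier [simp]: "mat_of_realcoord n x \<in> carrier_mat n n"
  by (simp add: mat_of_realcoord_def)

lemma mat_of_realcoord_add_smult:
  "mat_of_realcoord n (\<lambda>k. x k + c * y k) =
   mat_of_realcoord n x + complex_of_real c \<cdot>\<^sub>m mat_of_realcoord n y"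
  by (rule eq_matI) (auto simp: mat_of_realcoord_def complex_eq_iff)

lemma mat_of_realcoord_zero: "mat_of_realcoord n (\<lambda>k. 0) = 0\<^sub>m n n"
  by (rule eq_matI) (auto simp: mat_of_realcoord_def complex_eq_iff)

lemma mat_of_realcoord_cong:
  assumes "\<And>k. k < 2 * n^2 \<Longrightarrow> x k = y k"
  shows "mat_of_realcoord n x = mat_of_realcoord n y"
proof (rule eq_matI)
  fix i j assume "i < dim_row (mat_of_realcoord n y)" "j < dim_col (mat_of_realcoord n y)"
  then have ij: "i < n" "j < n" by (auto simp: mat_of_realcoord_def)
  then show "mat_of_realcoord n x $$ (i, j) = mat_of_realcoord n y $$ (i, j)"
    using index_lt_square[OF ij] assms by (auto simp: mat_of_realcoord_def)
qed (auto simp: mat_of_realcoord_def)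

lemma mat_of_realcoord_realcoord:
  assumes "A \<in> carrier_mat n n"
  shows "mat_of_realcoord n (realcoord n A) = A"
proof (rule eq_matI)
  fix i j assume "i < dim_row A" "j < dim_col A"
  then have ij: "i < n" "j < n" using assms by auto
  have "(i * n + j) div n = i" "(i * n + j) mod n = j" using ij by auto
  then show "mat_of_realcoord n (realcoord n A) $$ (i, j) = A $$ (i, j)"
    using ij index_lt_square[OF ij] by (simp add: mat_of_realcoord_def realcoord_def complex_eq_iff)
qed (use assms in \<open>auto simp: mat_of_realcoord_def\<close>)

lemma real_linear_expansion:
  fixes F :: "complex mat \<Rightarrow> real"
  assumes add: "\<And>A B. A \<in> carrier_mat n n \<Longrightarrow> B \<in> carrier_mat n n \<Longrightarrow> F (A + B) = F A + F B"
    and smult: "\<And>A c. A \<in> carrier_mat n n \<Longrightarrow> F (complex_of_real c \<cdot>\<^sub>m A) = c * F A"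
    and M: "M \<in> carrier_mat n n"
  shows "F M = (\<Sum>k<2 * n^2. realcoord n M k * F (mat_of_realcoord n (unit_coord k)))"
proof -
  let ?x = "realcoord n M"
  have "F (mat_of_realcoord n (\<lambda>k. if k < m then ?x k else 0)) =
      (\<Sum>k<m. ?x k * F (mat_of_realcoord n (unit_coord k)))" for m
  proof (induction m)
    case 0
    have "F (0\<^sub>m n n) = F (complex_of_real 0 \<cdot>\<^sub>m 0\<^sub>m n n)" by simp
    also have "\<dots> = 0" using smult[of "0\<^sub>m n n" 0] by simp
    finally show ?case by (simp add: mat_of_realcoord_zero)
  next
    case (Suc m)
    have "(\<lambda>k. if k < Suc m then ?x k else 0) =
        (\<lambda>k. (if k < m then ?x k else 0) + ?x m * unit_coord m k)"
      by (auto simp: unit_coord_def less_Suc_eq)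
    then show ?case
      using Suc add smult by (simp add: mat_of_realcoord_add_smult)
  qed
  moreover have "mat_of_realcoord n (\<lambda>k. if k < 2 * n^2 then ?x k else 0) = mat_of_realcoord n ?x"
    by (rule mat_of_realcoord_cong) simp
  ultimately show ?thesis
    using mat_of_realcoord_realcoord[OF M] by metis
qed

lemma mtrace_add:
  "A \<in> carrier_mat n n \<Longrightarrow> B \<in> carrier_mat n n \<Longrightarrow> mtrace (A + B) = mtrace A + mtrace B"
  by (auto simp: mtrace_def sum.distrib)

lemma mtrace_smult: "A \<in> carrier_mat n n \<Longrightarrow> mtrace (c \<cdot>\<^sub>m A) = c * mtrace A"
  by (auto simp: mtrace_def sum_distrib_left)

section \<open>Real linear representation of a 1gQFA\<close>

definition coord_matrix :: "nat \<Rightarrow> (complex mat \<Rightarrow> complex mat) \<Rightarrow> nat \<Rightarrow> nat \<Rightarrow> real" where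
  "coord_matrix n F k j = realcoord n (F (mat_of_realcoord n (unit_coord k))) j"

lemma realcoord_linear_map:
  assumes F: "linear_map_on n F" and M: "M \<in> carrier_mat n n" and j: "j < 2 * n^2"
  shows "realcoord n (F M) j = row_mult_fun (2 * n^2) (realcoord n M) (coord_matrix n F) j"
proof -
  have "realcoord n (F M) j =
      (\<Sum>k<2 * n^2. realcoord n M k * realcoord n (F (mat_of_realcoord n (unit_coord k))) j)"
    using F j by (intro real_linear_expansion[OF _ _ M])
      (auto simp: linear_map_on_def realcoord_add realcoord_smult)
  then show ?thesis by (simp add: row_mult_fun_def coord_matrix_def)
qed

lemma gqfa_state_carrier:
  assumes "\<rho>0 \<in> carrier_mat n n" and "\<And>\<sigma>. linear_map_on n (E \<sigma>)"
  shows "gqfa_state \<rho>0 E w \<in> carrier_mat n n"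
proof (induction w rule: rev_induct)
  case (snoc \<sigma> w)
  then show ?case using assms(2)[of \<sigma>] by (simp add: gqfa_state_def linear_map_on_def)
qed (simp add: gqfa_state_def assms(1))

lemma mtrace_gqfa_state:
  assumes "\<rho>0 \<in> carrier_mat n n" and "\<And>\<sigma>. linear_map_on n (E \<sigma>)"
    and "\<And>\<sigma>. trace_preserving n (E \<sigma>)"
  shows "mtrace (gqfa_state \<rho>0 E w) = mtrace \<rho>0"
proof (induction w rule: rev_induct)
  case (snoc \<sigma> w)
  then show ?case
    using gqfa_state_carrier[where E = E, OF assms(1,2)] assms(3)[of \<sigma>]
    by (simp add: gqfa_state_def trace_preserving_def)
qed (simp add: gqfa_state_def)

lemma realcoord_gqfa_state:
  assumes "\<rho>0 \<in> carrier_mat n n" and "\<And>\<sigma>. linear_map_on n (E \<sigma>)" and "j < 2 * n^2"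
  shows "realcoord n (gqfa_state \<rho>0 E w) j =
    linear_run (2 * n^2) (\<lambda>\<sigma>. coord_matrix n (E \<sigma>)) (realcoord n \<rho>0) w j"
  using assms(3)
proof (induction w arbitrary: j rule: rev_induct)
  case Nil
  then show ?case by (simp add: gqfa_state_def)
next
  case (snoc \<sigma> w)
  have "realcoord n (gqfa_state \<rho>0 E (w @ [\<sigma>])) j =
      row_mult_fun (2 * n^2) (realcoord n (gqfa_state \<rho>0 E w)) (coord_matrix n (E \<sigma>)) j"
    using realcoord_linear_map[OF assms(2) gqfa_state_carrier[where E = E, OF assms(1,2)] snoc.prems]
    by (simp add: gqfa_state_def)
  also have "\<dots> = linear_run (2 * n^2) (\<lambda>\<sigma>. coord_matrix n (E \<sigma>)) (realcoord n \<rho>0) (w @ [\<sigma>]) j"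
    using snoc.IH by (simp add: row_mult_fun_def)
  finally show ?case .
qed

lemma gqfa_real_linear_representation:
  assumes "gqfa n \<rho>0 E Pacc"
  shows "\<exists>A x0 \<beta>. \<forall>w. gqfa_prob \<rho>0 E Pacc w - lam =
    (\<Sum>i<2 * n^2. linear_run (2 * n^2) A x0 w i * \<beta> i)"
proof -
  have \<rho>0: "\<rho>0 \<in> carrier_mat n n" "mtrace \<rho>0 = 1" and Pacc: "Pacc \<in> carrier_mat n n"
    and lin: "\<And>\<sigma>. linear_map_on n (E \<sigma>)" and tp: "\<And>\<sigma>. trace_preserving n (E \<sigma>)"
    using assms by (auto simp: gqfa_def density_op_def psd_def orth_projector_def cptp_def)
  define \<phi> where "\<phi> M = Re (mtrace (Pacc * M)) - lam * Re (mtrace M)" for M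
  have \<phi>_add: "\<phi> (X + Y) = \<phi> X + \<phi> Y" if "X \<in> carrier_mat n n" "Y \<in> carrier_mat n n" for X Y
  proof -
    have "mtrace (Pacc * (X + Y)) = mtrace (Pacc * X) + mtrace (Pacc * Y)"
      using that Pacc by (simp add: mult_add_distrib_mat mtrace_add[of _ n])
    then show ?thesis using that by (simp add: \<phi>_def mtrace_add algebra_simps)
  qed
  have \<phi>_smult: "\<phi> (complex_of_real c \<cdot>\<^sub>m X) = c * \<phi> X" if "X \<in> carrier_mat n n" for X c
  proof -
    have "mtrace (Pacc * (complex_of_real c \<cdot>\<^sub>m X)) = complex_of_real c * mtrace (Pacc * X)"
      using that Pacc by (simp add: mult_smult_distrib mtrace_smult[of _ n])
    then show ?thesis using that by (simp add: \<phi>_def mtrace_smult algebra_simps)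
  qed
  define \<beta> where "\<beta> k = \<phi> (mat_of_realcoord n (unit_coord k))" for k
  have "gqfa_prob \<rho>0 E Pacc w - lam =
      (\<Sum>k<2 * n^2. linear_run (2 * n^2) (\<lambda>\<sigma>. coord_matrix n (E \<sigma>)) (realcoord n \<rho>0) w k * \<beta> k)"
    for w
  proof -
    let ?\<rho> = "gqfa_state \<rho>0 E w"
    have \<rho>: "?\<rho> \<in> carrier_mat n n" "mtrace ?\<rho> = 1"
      using gqfa_state_carrier[where E = E, OF \<rho>0(1) lin]
        mtrace_gqfa_state[where E = E, OF \<rho>0(1) lin tp] \<rho>0(2) by auto
    then have "gqfa_prob \<rho>0 E Pacc w - lam = \<phi> ?\<rho>"
      by (simp add: \<phi>_def gqfa_prob_def)
    also have "\<dots> = (\<Sum>k<2 * n^2. realcoord n ?\<rho> k * \<beta> k)"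
      unfolding \<beta>_def by (rule real_linear_expansion[OF \<phi>_add \<phi>_smult \<rho>(1)])
    also have "\<dots> = (\<Sum>k<2 * n^2.
        linear_run (2 * n^2) (\<lambda>\<sigma>. coord_matrix n (E \<sigma>)) (realcoord n \<rho>0) w k * \<beta> k)"
      using realcoord_gqfa_state[where E = E, OF \<rho>0(1) lin] by simp
    finally show ?thesis .
  qed
  then show ?thesis by blast
qed

theorem corollary3p3:
  fixes n :: nat
    and \<rho>0 :: "complex mat" and E :: "'a::finite \<Rightarrow> complex mat \<Rightarrow> complex mat"
    and Pacc :: "complex mat" and lam :: real
  assumes "n \<ge> 1"
    and "gqfa n \<rho>0 E Pacc"
    and "0 \<le> lam" and "lam < 1"
  shows "\<exists>m \<pi> (P :: 'a \<Rightarrow> real mat) Pend F \<mu>.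
           pfa m \<pi> P Pend F \<and> m \<le> 2 * n ^ 2 + 6 \<and> 0 \<le> \<mu> \<and> \<mu> < 1 \<and>
           pfa_lang \<pi> P Pend F \<mu> = gqfa_lang \<rho>0 E Pacc lam"
proof -
  obtain A x0 \<beta> where rep:
    "\<And>w. gqfa_prob \<rho>0 E Pacc w - lam = (\<Sum>i<2 * n^2. linear_run (2 * n^2) A x0 w i * \<beta> i)"
    using gqfa_real_linear_representation[OF assms(2)] by blast
  obtain \<pi> and P :: "'a \<Rightarrow> real mat" and Pend F \<mu>
    where pfa: "pfa (Suc (Suc (2 * n^2))) \<pi> P Pend F" and \<mu>: "0 \<le> \<mu>" "\<mu> < 1"
      and acc: "\<And>w. pfa_prob \<pi> P Pend F w > \<mu> \<longleftrightarrow>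
        (\<Sum>i<2 * n^2. linear_run (2 * n^2) A x0 w i * \<beta> i) > 0"
    using turakainen[of "2 * n^2" A x0 \<beta>] by blast
  have "pfa_lang \<pi> P Pend F \<mu> = gqfa_lang \<rho>0 E Pacc lam"
    unfolding pfa_lang_def gqfa_lang_def by (simp add: acc flip: rep)
  moreover have "Suc (Suc (2 * n^2)) \<le> 2 * n ^ 2 + 6"
    by simp
  ultimately show ?thesis
    using pfa \<mu> by blast
qed

end
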